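(* Let $n=2m-1$ be odd, fix $\boldsymbol{\rho}^0\in\mathcal{P}_n$ and $\alpha\in(0,\infty)$, and let $\mathbf{R}\sim\mathrm{Mallows}(\boldsymbol{\rho}^0,\alpha)$ with the footrule distance. For $i=1,\dots,n$ let $o^0_i$ be the item with $\rho^0_{o^0_i}=i$. Then $$\mathbb{E}[R_{o^0_m}\mid\boldsymbol{\rho}^0,\alpha]=\rho^0_{o^0_m}=m.$$
   Context: $\mathcal{P}_n$ denotes the set of permutations of $\{1,\dots,n\}$; a ranking $\mathbf{r}\in\mathcal{P}_n$ assigns rank $r_i$ to item $i$. The footrule distance is $d(\mathbf{r},\boldsymbol{\rho})=\sum_{i=1}^n|r_i-\rho_i|$. The Mallows distribution $\mathrm{Mallows}(\boldsymbol{\rho}^0,\alpha)$ on $\mathcal{P}_n$ has probability mass function $P(\mathbf{R}=\mathbf{r}\mid\boldsymbol{\rho}^0,\alpha)=\frac{1}{Z_n(\alpha)}\exp\{-\frac{\alpha}{n}d(\mathbf{r},\boldsymbol{\rho}^0)\}$ with normalizing constant $Z_n(\alpha)$. *)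

theory Defs
  imports "HOL-Analysis.Analysis" "HOL-Combinatorics.Permutations"
begin

definition rankings :: "nat \<Rightarrow> (nat \<Rightarrow> nat) set" where
  "rankings n = {r. r permutes {1..n}}"

definition footrule :: "nat \<Rightarrow> (nat \<Rightarrow> nat) \<Rightarrow> (nat \<Rightarrow> nat) \<Rightarrow> real" where
  "footrule n r rho = (\<Sum>i\<in>{1..n}. \<bar>real (r i) - real (rho i)\<bar>)"

definition mallows_Z :: "nat \<Rightarrow> (nat \<Rightarrow> nat) \<Rightarrow> real \<Rightarrow> real" where
  "mallows_Z n rho0 \<alpha> = (\<Sum>r\<in>rankings n. exp (- (\<alpha> / real n) * footrule n r rho0))"

definition mallows_pmf :: "nat \<Rightarrow> (nat \<Rightarrow> nat) \<Rightarrow> real \<Rightarrow> (nat \<Rightarrow> nat) \<Rightarrow> real" where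
  "mallows_pmf n rho0 \<alpha> r =
     exp (- (\<alpha> / real n) * footrule n r rho0) / mallows_Z n rho0 \<alpha>"

definition mallows_expected_rank :: "nat \<Rightarrow> (nat \<Rightarrow> nat) \<Rightarrow> real \<Rightarrow> nat \<Rightarrow> real" where
  "mallows_expected_rank n rho0 \<alpha> i =
     (\<Sum>r\<in>rankings n. real (r i) * mallows_pmf n rho0 \<alpha> r)"

end

theory Submission
  imports Defs
begin

text \<open>Reversing all ranks, \<open>k \<mapsto> n + 1 - k\<close>, preserves footrule distances, and so does
  relabelling the items by a permutation. Composing the reversal with the relabelling
  \<open>\<pi> = \<rho>\<^sup>0\<^sup>-\<^sup>1 \<circ> rev \<circ> \<rho>\<^sup>0\<close> gives an involution of the rankings that fixes \<open>\<rho>\<^sup>0\<close>, hence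
  preserves the Mallows distribution, and sends the rank of item \<open>o\<^sup>0\<^sub>k\<close> to \<open>n + 1\<close> minus the rank
  of item \<open>o\<^sup>0\<^sub>n\<^sub>+\<^sub>1\<^sub>-\<^sub>k\<close>. So the expected ranks of these two items add up to \<open>n + 1\<close>; for the
  middle item \<open>k = n + 1 - k = m\<close>, which forces the expected rank to be \<open>m\<close>.\<close>

definition reverse_rank :: "nat \<Rightarrow> nat \<Rightarrow> nat" where
  "reverse_rank n k = (if k \<in> {1..n} then n + 1 - k else k)"

lemma reverse_rank_in_range: "k \<in> {1..n} \<Longrightarrow> reverse_rank n k = n + 1 - k"
  by (simp add: reverse_rank_def)

lemma reverse_rank_reverse_rank [simp]: "reverse_rank n (reverse_rank n k) = k"
  by (auto simp: reverse_rank_def)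

lemma reverse_rank_permutes: "reverse_rank n permutes {1..n}"
proof (rule bij_imp_permutes)
  show "bij_betw (reverse_rank n) {1..n} {1..n}"
    by (rule bij_betwI[where g = "reverse_rank n"]) (auto simp: reverse_rank_def)
  show "x \<notin> {1..n} \<Longrightarrow> reverse_rank n x = x" for x
    unfolding reverse_rank_def by presburger
qed

lemma abs_diff_reverse_rank:
  assumes "a \<in> {1..n}" "b \<in> {1..n}"
  shows "\<bar>real (reverse_rank n a) - real (reverse_rank n b)\<bar> = \<bar>real a - real b\<bar>"
  using assms by (auto simp: reverse_rank_def)

lemma footrule_compose_permutes:
  assumes "\<pi> permutes {1..n}"
  shows "footrule n (r \<circ> \<pi>) (rho \<circ> \<pi>) = footrule n r rho"
  using sum.permute[OF assms, of "\<lambda>i. \<bar>real (r i) - real (rho i)\<bar>"]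
  by (simp add: footrule_def comp_def)

lemma footrule_reverse_rank:
  assumes "r permutes {1..n}" "rho permutes {1..n}"
  shows "footrule n (reverse_rank n \<circ> r) (reverse_rank n \<circ> rho) = footrule n r rho"
  unfolding footrule_def comp_def
  using assms by (intro sum.cong refl abs_diff_reverse_rank) (simp_all only: permutes_in_image)

lemma finite_rankings: "finite (rankings n)"
  by (simp add: rankings_def finite_permutations)

lemma mallows_Z_pos: "mallows_Z n rho0 \<alpha> > 0"
proof -
  have "id \<in> rankings n" by (simp add: rankings_def)
  then show ?thesis
    unfolding mallows_Z_def using finite_rankings by (intro sum_pos) auto
qed

lemma sum_mallows_pmf: "(\<Sum>r\<in>rankings n. mallows_pmf n rho0 \<alpha> r) = 1"
  using mallows_Z_pos[of n rho0 \<alpha>]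
  by (simp add: mallows_pmf_def mallows_Z_def flip: sum_divide_distrib)

definition mallows_reflection :: "nat \<Rightarrow> (nat \<Rightarrow> nat) \<Rightarrow> (nat \<Rightarrow> nat) \<Rightarrow> nat \<Rightarrow> nat" where
  "mallows_reflection n rho0 r = reverse_rank n \<circ> r \<circ> (inv rho0 \<circ> reverse_rank n \<circ> rho0)"

context
  fixes n :: nat and rho0 :: "nat \<Rightarrow> nat"
  assumes rho0: "rho0 \<in> rankings n"
begin

private lemma rho0_permutes: "rho0 permutes {1..n}"
  using rho0 by (simp add: rankings_def)

private lemma item_relabelling_permutes: "inv rho0 \<circ> reverse_rank n \<circ> rho0 permutes {1..n}"
  by (intro permutes_compose permutes_inv rho0_permutes reverse_rank_permutes)

lemma mallows_reflection_in_rankings: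
  "r \<in> rankings n \<Longrightarrow> mallows_reflection n rho0 r \<in> rankings n"
  unfolding mallows_reflection_def rankings_def mem_Collect_eq
  by (intro permutes_compose item_relabelling_permutes reverse_rank_permutes)

lemma mallows_reflection_mallows_reflection [simp]:
  "mallows_reflection n rho0 (mallows_reflection n rho0 r) = r"
  using permutes_inverses[OF rho0_permutes] by (simp add: mallows_reflection_def fun_eq_iff)

lemma mallows_reflection_apply:
  assumes "r \<in> rankings n" "k \<in> {1..n}"
  shows "real (mallows_reflection n rho0 r (inv rho0 k))
           = real n + 1 - real (r (inv rho0 (n + 1 - k)))"
proof -
  have "mallows_reflection n rho0 r (inv rho0 k) = reverse_rank n (r (inv rho0 (n + 1 - k)))"
    using assms(2) by (simp add: mallows_reflection_def reverse_rank_in_range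
        permutes_inverses(1)[OF rho0_permutes])
  moreover have "r (inv rho0 (n + 1 - k)) \<in> {1..n}"
  proof -
    have "n + 1 - k \<in> {1..n}" using assms(2) by auto
    then show ?thesis
      using assms(1) permutes_inv[OF rho0_permutes] unfolding rankings_def
      by (simp only: mem_Collect_eq permutes_in_image)
  qed
  ultimately show ?thesis
    by (simp add: reverse_rank_in_range)
qed

lemma footrule_mallows_reflection:
  assumes "r \<in> rankings n"
  shows "footrule n (mallows_reflection n rho0 r) rho0 = footrule n r rho0"
proof -
  let ?\<pi> = "inv rho0 \<circ> reverse_rank n \<circ> rho0"
  have "reverse_rank n \<circ> rho0 \<circ> ?\<pi> = rho0"
    using permutes_inverses(1)[OF rho0_permutes] by (simp add: fun_eq_iff)
  then have "footrule n (mallows_reflection n rho0 r) rho0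
      = footrule n (reverse_rank n \<circ> r \<circ> ?\<pi>) (reverse_rank n \<circ> rho0 \<circ> ?\<pi>)"
    by (simp only: mallows_reflection_def)
  also have "\<dots> = footrule n (reverse_rank n \<circ> r) (reverse_rank n \<circ> rho0)"
    by (rule footrule_compose_permutes[OF item_relabelling_permutes])
  also have "\<dots> = footrule n r rho0"
    using assms rho0_permutes by (simp add: footrule_reverse_rank rankings_def)
  finally show ?thesis .
qed

lemma mallows_expected_rank_reversal:
  assumes "k \<in> {1..n}"
  shows "mallows_expected_rank n rho0 \<alpha> (inv rho0 k)
           + mallows_expected_rank n rho0 \<alpha> (inv rho0 (n + 1 - k)) = real n + 1"
proof -
  let ?\<Phi> = "mallows_reflection n rho0" and ?p = "mallows_pmf n rho0 \<alpha>"
  have "mallows_expected_rank n rho0 \<alpha> (inv rho0 k)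
      = (\<Sum>r\<in>rankings n. real (?\<Phi> r (inv rho0 k)) * ?p (?\<Phi> r))"
    unfolding mallows_expected_rank_def
    by (rule sum.reindex_bij_witness[of _ ?\<Phi> ?\<Phi>]) (auto simp: mallows_reflection_in_rankings)
  also have "\<dots> = (\<Sum>r\<in>rankings n. (real n + 1 - real (r (inv rho0 (n + 1 - k)))) * ?p r)"
    using assms by (intro sum.cong refl)
      (simp add: mallows_reflection_apply mallows_pmf_def footrule_mallows_reflection)
  also have "\<dots> = real n + 1 - mallows_expected_rank n rho0 \<alpha> (inv rho0 (n + 1 - k))"
    by (simp add: mallows_expected_rank_def left_diff_distrib sum_subtractf
        sum_mallows_pmf flip: sum_distrib_left)
  finally show ?thesis by simp
qed

end

theorem mainTheorem4:
  fixes m n :: nat and rho0 :: "nat \<Rightarrow> nat" and \<alpha> :: real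
  assumes "m \<ge> 1" and "n = 2 * m - 1"
    and "rho0 \<in> rankings n"
    and "\<alpha> > 0"
  shows "mallows_expected_rank n rho0 \<alpha> (inv rho0 m) = real (rho0 (inv rho0 m))
         \<and> real (rho0 (inv rho0 m)) = real m"
proof -
  have middle: "m \<in> {1..n}" "n + 1 - m = m"
    using assms(1,2) by auto
  have rank_middle: "rho0 (inv rho0 m) = m"
    using assms(3) by (simp add: rankings_def permutes_inverses)
  have "2 * mallows_expected_rank n rho0 \<alpha> (inv rho0 m) = real n + 1"
    using mallows_expected_rank_reversal[OF assms(3) middle(1), of \<alpha>] middle(2) by simp
  then have "mallows_expected_rank n rho0 \<alpha> (inv rho0 m) = real m"
    using assms(1,2) by simp
  with rank_middle show ?thesis by simp
qed

end
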